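(* Let $N\ge3$ and consider the complete-graph ensemble ($z=N-1$) described in the context. Fix a spring $e$ and $\bar\ell$ with $0<|\bar\ell|<1/2$, and let $F_{Y_{N-2}}$ be the cumulative distribution function of $$Y_{N-2}:=\frac{\Delta l_e-\mathbb E(\Delta l_e\mid\bar l_e=\bar\ell)}{\sqrt{\operatorname{Var}(\Delta l_e\mid\bar l_e=\bar\ell)}}$$ under the conditional law given $\bar l_e=\bar\ell$. Then $$\sup_{x\in\mathbb R}|F_{Y_{N-2}}(x)-\Phi_{0,1}(x)|\le\frac{C}{\sqrt{N-2}}\,\frac{\bar\ell^2+(1-|\bar\ell|)^2}{\sqrt{|\bar\ell|-\bar\ell^2}},$$ where $\Phi_{0,1}$ is the standard normal cdf and $C$ is the absolute constant of the Berry–Esseen theorem (one may take $C=0.4785$). In particular, the standardized conditional distribution converges to the standard normal at rate $(N-2)^{-1/2}$ as $N\to\infty$.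
   Context: Let the circle be $\mathbb R/\mathbb Z$. Node positions $x_1,\dots,x_N$ are i.i.d. uniform on $\mathbb R/\mathbb Z$ and every pair of nodes is joined by exactly one spring. A spring joining nodes $a<b$ is oriented from $a$ to $b$ with initial signed length $\bar l_e\in[-1/2,1/2)$, the representative of $x_b-x_a$ mod $1$ in $[-1/2,1/2)$ (uniform on $[-1/2,1/2)$). With $\mathbf C$ a signed cycle matrix (fundamental cycles of a spanning tree, arbitrarily oriented; entries $\pm1$ for edges on a cycle with agreeing/opposite orientation, $0$ otherwise), the relaxed lengths are $\boldsymbol l^*=\mathbf C^T(\mathbf C\mathbf C^T)^{-1}\mathbf C\bar{\boldsymbol l}$, the minimizer of $\tfrac12\boldsymbol l^T\boldsymbol l$ subject to preserving the integer winding numbers $\mathbf C\boldsymbol l=\mathbf C\bar{\boldsymbol l}$, and $\Delta\boldsymbol l=\boldsymbol l^*-\bar{\boldsymbol l}$. Berry–Esseen theorem: there is an absolute constant $C$ such that for i.i.d. $X_1,X_2,\dots$ with mean $0$, variance $\sigma^2>0$, $\mathbb E|X_1|^3=\rho<\infty$, the cdf $F_n$ of $(X_1+\dots+X_n)/(\sqrt n\sigma)$ satisfies $\sup_x|F_n(x)-\Phi_{0,1}(x)|\le C\rho/(\sigma^3\sqrt n)$. *)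

theory Defs
  imports "HOL-Probability.Probability"
begin

definition std_normal_cdf :: "real \<Rightarrow> real" where
  "std_normal_cdf x = measure (density lborel std_normal_density) {..x}"

definition berry_esseen_const :: "real \<Rightarrow> bool" where
  "berry_esseen_const C \<longleftrightarrow>
    (\<forall>(\<mu>::real measure) (n::nat) (\<sigma>::real) (\<rho>::real).
       prob_space \<mu> \<and> sets \<mu> = sets borel \<and>
       integrable \<mu> (\<lambda>t. t) \<and> integral\<^sup>L \<mu> (\<lambda>t. t) = 0 \<and>
       integrable \<mu> (\<lambda>t. t\<^sup>2) \<and> \<sigma> > 0 \<and> integral\<^sup>L \<mu> (\<lambda>t. t\<^sup>2) = \<sigma>\<^sup>2 \<and>
       integrable \<mu> (\<lambda>t. \<bar>t\<bar> ^ 3) \<and> \<rho> = integral\<^sup>L \<mu> (\<lambda>t. \<bar>t\<bar> ^ 3) \<and> n \<ge> 1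
     \<longrightarrow> (\<forall>x. \<bar>measure (PiM {..<n} (\<lambda>_. \<mu>))
                     {\<omega> \<in> space (PiM {..<n} (\<lambda>_. \<mu>)). (\<Sum>i<n. \<omega> i) / (sqrt (real n) * \<sigma>) \<le> x}
                   - std_normal_cdf x\<bar> \<le> C * \<rho> / (\<sigma> ^ 3 * sqrt (real n))))"

(* Nodes are 0..N-1; springs (edges) of the complete graph are pairs (a,b) with a < b < N,
   oriented from a to b. *)
definition springs :: "nat \<Rightarrow> (nat \<times> nat) set" where
  "springs N = {(a, b). a < b \<and> b < N}"

definition incid :: "nat \<Rightarrow> nat \<times> nat \<Rightarrow> real" where
  "incid v e = (if v = snd e then 1 else if v = fst e then -1 else 0)"

definition srep :: "real \<Rightarrow> real" where
  "srep t = t - of_int \<lfloor>t + 1/2\<rfloor>"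

(* initial signed lengths from positions x_v in [0,1) representing R/Z *)
definition init_len :: "(nat \<Rightarrow> real) \<Rightarrow> nat \<times> nat \<Rightarrow> real" where
  "init_len x e = srep (x (snd e) - x (fst e))"

definition spanning_tree :: "nat \<Rightarrow> (nat \<times> nat) set \<Rightarrow> bool" where
  "spanning_tree N T \<longleftrightarrow> T \<subseteq> springs N \<and> card T = N - 1 \<and>
     (\<forall>u<N. \<forall>v<N. (u, v) \<in> {(p, q). (p, q) \<in> T \<or> (q, p) \<in> T}\<^sup>*)"

definition fund_cycle_matrix ::
  "nat \<Rightarrow> (nat \<times> nat) set \<Rightarrow> (nat \<times> nat \<Rightarrow> nat \<times> nat \<Rightarrow> real) \<Rightarrow> bool" where
  "fund_cycle_matrix N T Cm \<longleftrightarrow>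
     (\<forall>f \<in> springs N - T.
        (\<forall>g. Cm f g \<in> {-1, 0, 1}) \<and>
        (\<forall>g. g \<notin> T \<union> {f} \<longrightarrow> Cm f g = 0) \<and>
        Cm f f \<noteq> 0 \<and>
        (\<forall>v<N. (\<Sum>g\<in>springs N. incid v g * Cm f g) = 0))"

definition same_windings ::
  "nat \<Rightarrow> (nat \<times> nat) set \<Rightarrow> (nat \<times> nat \<Rightarrow> nat \<times> nat \<Rightarrow> real) \<Rightarrow>
   (nat \<times> nat \<Rightarrow> real) \<Rightarrow> (nat \<times> nat \<Rightarrow> real) \<Rightarrow> bool" where
  "same_windings N T Cm l lb \<longleftrightarrow>
     (\<forall>f \<in> springs N - T. (\<Sum>g\<in>springs N. Cm f g * l g) = (\<Sum>g\<in>springs N. Cm f g * lb g))"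

(* relaxed lengths l*: the minimiser of (1/2) l^T l subject to C l = C lbar
   (vectors are functions on springs, taken to be 0 off the springs) *)
definition relaxed_len ::
  "nat \<Rightarrow> (nat \<times> nat) set \<Rightarrow> (nat \<times> nat \<Rightarrow> nat \<times> nat \<Rightarrow> real) \<Rightarrow>
   (nat \<times> nat \<Rightarrow> real) \<Rightarrow> nat \<times> nat \<Rightarrow> real" where
  "relaxed_len N T Cm lb = (THE l. (\<forall>g. g \<notin> springs N \<longrightarrow> l g = 0) \<and> same_windings N T Cm l lb \<and>
      (\<forall>l'. (\<forall>g. g \<notin> springs N \<longrightarrow> l' g = 0) \<and> same_windings N T Cm l' lb \<longrightarrow>
         (\<Sum>g\<in>springs N. (l g)\<^sup>2 / 2) \<le> (\<Sum>g\<in>springs N. (l' g)\<^sup>2 / 2)))"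

definition delta_len ::
  "nat \<Rightarrow> (nat \<times> nat) set \<Rightarrow> (nat \<times> nat \<Rightarrow> nat \<times> nat \<Rightarrow> real) \<Rightarrow>
   (nat \<Rightarrow> real) \<Rightarrow> nat \<times> nat \<Rightarrow> real" where
  "delta_len N T Cm x e = relaxed_len N T Cm (init_len x) e - init_len x e"

(* law of N i.i.d. uniform node positions on R/Z, represented in [0,1) *)
definition node_law :: "nat \<Rightarrow> (nat \<Rightarrow> real) measure" where
  "node_law N = PiM {..<N} (\<lambda>_. uniform_measure lborel {0..<1})"

(* Conditional law given lbar_(a,b) = ell: x_a uniform, x_b = x_a + ell (mod 1),
   all other nodes i.i.d. uniform; realised as the image of node_law under this map. *)
definition cond_config :: "nat \<Rightarrow> nat \<Rightarrow> real \<Rightarrow> (nat \<Rightarrow> real) \<Rightarrow> (nat \<Rightarrow> real)" where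
  "cond_config a b ell x = x(b := frac (x a + ell))"

end

theory Submission
  imports Defs "Jordan_Normal_Form.Determinant"
begin

(* For the complete graph the relaxation is the orthogonal projection of the initial lengths onto
   the divergence-free flows, and the graph Laplacian is N I - J; hence
   Delta l_e = -(div lb (b) - div lb (a)) / N for e = (a, b).  Conditioned on lb_e = ell and
   measured relative to node a, every other node c contributes an independent copy of a two-point
   variable (value -ell, or sgn ell - ell with probability |ell|), because the shear
   x |-> (x_a, x_c - x_a mod 1) preserves the uniform product law.  So Delta l_e is an affine
   image of a sum of N - 2 i.i.d. variables and Berry--Esseen applies with
   sigma^2 = |ell| - ell^2 and E|W|^3 = sigma^2 (ell^2 + (1 - |ell|)^2). *)

section \<open>The relaxed lengths on the complete graph\<close>

definition divergence :: "nat \<Rightarrow> (nat \<times> nat \<Rightarrow> real) \<Rightarrow> nat \<Rightarrow> real" where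
  "divergence N l v = (\<Sum>g\<in>springs N. incid v g * l g)"

(* the projection of lb onto the divergence-free flows: lb minus the gradient of div lb / N *)
definition cycle_part :: "nat \<Rightarrow> (nat \<times> nat \<Rightarrow> real) \<Rightarrow> nat \<times> nat \<Rightarrow> real" where
  "cycle_part N lb g =
     (if g \<in> springs N then lb g - (divergence N lb (snd g) - divergence N lb (fst g)) / real N else 0)"

lemma finite_springs [simp]: "finite (springs N)"
  by (rule finite_subset[of _ "{..<N} \<times> {..<N}"]) (auto simp: springs_def)

lemma sum_incid_mult:
  assumes "g \<in> springs N"
  shows "(\<Sum>v<N. incid v g * \<phi> v) = \<phi> (snd g) - \<phi> (fst g)"
proof -
  obtain p q where g: "g = (p, q)" "p < q" "q < N" using assms by (auto simp: springs_def)
  have "(\<Sum>v<N. incid v g * \<phi> v) = (\<Sum>v<N. (if v = q then \<phi> v else 0) - (if v = p then \<phi> v else 0))"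
    by (rule sum.cong) (use g in \<open>auto simp: incid_def\<close>)
  also have "\<dots> = \<phi> q - \<phi> p" using g by (simp add: sum_subtractf)
  finally show ?thesis using g by simp
qed

lemma sum_springs_incid:
  assumes "v < N"
  shows "(\<Sum>g\<in>springs N. incid v g * h g) = (\<Sum>u<v. h (u, v)) - (\<Sum>u\<in>{v<..<N}. h (v, u))"
proof -
  have "(\<Sum>g\<in>springs N. incid v g * h g) =
        (\<Sum>g\<in>springs N. (if snd g = v then h g else 0) - (if fst g = v then h g else 0))"
    by (rule sum.cong) (auto simp: incid_def springs_def)
  also have "\<dots> = (\<Sum>g\<in>springs N \<inter> {g. snd g = v}. h g) - (\<Sum>g\<in>springs N \<inter> {g. fst g = v}. h g)"
    by (simp add: sum_subtractf sum.inter_restrict)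
  also have "springs N \<inter> {g. snd g = v} = (\<lambda>u. (u, v)) ` {..<v}"
    using assms by (auto simp: springs_def)
  also have "springs N \<inter> {g. fst g = v} = (\<lambda>u. (v, u)) ` {v<..<N}"
    using assms by (auto simp: springs_def)
  finally show ?thesis
    by (simp add: sum.reindex inj_on_def)
qed

lemma sum_divergence: "(\<Sum>v<N. divergence N l v) = 0"
proof -
  have "(\<Sum>v<N. divergence N l v) = (\<Sum>g\<in>springs N. \<Sum>v<N. incid v g * l g)"
    unfolding divergence_def by (rule sum.swap)
  also have "\<dots> = 0"
  proof (rule sum.neutral, rule ballI)
    fix g assume "g \<in> springs N"
    from sum_incid_mult[OF this, of "\<lambda>_. l g"] show "(\<Sum>v<N. incid v g * l g) = 0" by simp
  qed
  finally show ?thesis .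
qed

lemma divergence_gradient:
  assumes "v < N"
  shows "divergence N (\<lambda>g. \<phi> (snd g) - \<phi> (fst g)) v = real N * \<phi> v - (\<Sum>u<N. \<phi> u)"
proof -
  have "{..<N} = insert v ({..<v} \<union> {v<..<N})" using assms by auto
  then have "(\<Sum>u<N. \<phi> u) = \<phi> v + sum \<phi> ({..<v} \<union> {v<..<N})" by simp
  also have "sum \<phi> ({..<v} \<union> {v<..<N}) = (\<Sum>u<v. \<phi> u) + (\<Sum>u\<in>{v<..<N}. \<phi> u)"
    by (rule sum.union_disjoint) auto
  finally have split: "(\<Sum>u<N. \<phi> u) = (\<Sum>u<v. \<phi> u) + \<phi> v + (\<Sum>u\<in>{v<..<N}. \<phi> u)"
    by simp
  have "divergence N (\<lambda>g. \<phi> (snd g) - \<phi> (fst g)) v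
      = (\<Sum>u<v. \<phi> v - \<phi> u) - (\<Sum>u\<in>{v<..<N}. \<phi> u - \<phi> v)"
    unfolding divergence_def using sum_springs_incid[OF assms] by simp
  also have "\<dots> = real v * \<phi> v - (\<Sum>u<v. \<phi> u) - (\<Sum>u\<in>{v<..<N}. \<phi> u) + real (N - 1 - v) * \<phi> v"
    by (simp add: sum_subtractf)
  also have "\<dots> = real N * \<phi> v - (\<Sum>u<N. \<phi> u)"
    using assms by (simp add: split of_nat_diff algebra_simps)
  finally show ?thesis .
qed

lemma divergence_cycle_part:
  assumes "v < N"
  shows "divergence N (cycle_part N lb) v = 0"
proof -
  define \<phi> where "\<phi> u = divergence N lb u / real N" for u
  have "divergence N (cycle_part N lb) v
      = (\<Sum>g\<in>springs N. incid v g * lb g - incid v g * (\<phi> (snd g) - \<phi> (fst g)))"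
    unfolding divergence_def cycle_part_def \<phi>_def
    by (rule sum.cong) (auto simp: algebra_simps diff_divide_distrib)
  also have "\<dots> = divergence N lb v - (real N * \<phi> v - (\<Sum>u<N. \<phi> u))"
    using divergence_gradient[OF assms, of \<phi>] by (simp add: divergence_def sum_subtractf)
  also have "(\<Sum>u<N. \<phi> u) = 0"
    by (simp add: \<phi>_def sum_divide_distrib[symmetric] sum_divergence)
  finally show ?thesis using assms by (simp add: \<phi>_def)
qed

lemma same_windings_cycle_part:
  assumes "fund_cycle_matrix N T Cm"
  shows "same_windings N T Cm (cycle_part N lb) lb"
  unfolding same_windings_def
proof
  fix f assume f: "f \<in> springs N - T"
  define \<phi> where "\<phi> u = divergence N lb u / real N" for u
  have cycle: "(\<Sum>g\<in>springs N. incid v g * Cm f g) = 0" if "v < N" for v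
    using assms f that by (auto simp: fund_cycle_matrix_def)
  have "(\<Sum>g\<in>springs N. Cm f g * cycle_part N lb g)
      = (\<Sum>g\<in>springs N. Cm f g * lb g - (\<Sum>v<N. \<phi> v * (incid v g * Cm f g)))"
  proof (rule sum.cong[OF refl])
    fix g assume g: "g \<in> springs N"
    have "(\<Sum>v<N. \<phi> v * (incid v g * Cm f g)) = Cm f g * (\<Sum>v<N. incid v g * \<phi> v)"
      by (simp add: sum_distrib_left mult_ac)
    also have "\<dots> = Cm f g * (\<phi> (snd g) - \<phi> (fst g))"
      using sum_incid_mult[OF g] by simp
    finally have "(\<Sum>v<N. \<phi> v * (incid v g * Cm f g)) = Cm f g * (\<phi> (snd g) - \<phi> (fst g))" .
    then show "Cm f g * cycle_part N lb g = Cm f g * lb g - (\<Sum>v<N. \<phi> v * (incid v g * Cm f g))"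
      using g by (simp add: cycle_part_def \<phi>_def diff_divide_distrib right_diff_distrib)
  qed
  also have "\<dots> = (\<Sum>g\<in>springs N. Cm f g * lb g) - (\<Sum>g\<in>springs N. \<Sum>v<N. \<phi> v * (incid v g * Cm f g))"
    by (simp add: sum_subtractf)
  also have "(\<Sum>g\<in>springs N. \<Sum>v<N. \<phi> v * (incid v g * Cm f g))
      = (\<Sum>v<N. \<phi> v * (\<Sum>g\<in>springs N. incid v g * Cm f g))"
    by (subst sum.swap) (simp add: sum_distrib_left)
  finally show "(\<Sum>g\<in>springs N. Cm f g * cycle_part N lb g) = (\<Sum>g\<in>springs N. Cm f g * lb g)"
    by (simp add: cycle)
qed

lemma spanning_tree_potential_const:
  assumes "spanning_tree N T" "\<And>g. g \<in> T \<Longrightarrow> \<psi> (snd g) = \<psi> (fst g)" "u < N" "w < N"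
  shows "\<psi> u = \<psi> w"
proof -
  have "(u, w) \<in> {(p, q). (p, q) \<in> T \<or> (q, p) \<in> T}\<^sup>*"
    using assms by (auto simp: spanning_tree_def)
  then show ?thesis
  proof (induction rule: rtrancl_induct)
    case (step y z)
    then show ?case using assms(2)[of "(y, z)"] assms(2)[of "(z, y)"] by auto
  qed simp
qed

(* rows: the tree springs, enumerated by h; columns: the nodes except the grounded node N - 1 *)
definition tree_incidence_mat :: "nat \<Rightarrow> (nat \<Rightarrow> nat \<times> nat) \<Rightarrow> real mat" where
  "tree_incidence_mat N h = mat (N - 1) (N - 1) (\<lambda>(i, j). incid j (h i))"

lemma det_tree_incidence_mat:
  assumes st: "spanning_tree N T" and N: "N \<ge> 1" and h: "bij_betw h {..<N - 1} T"
  shows "det (tree_incidence_mat N h) \<noteq> 0"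
proof
  define n where "n = N - 1"
  define A where "A = tree_incidence_mat N h"
  have A_eq: "A = mat n n (\<lambda>(i, j). incid j (h i))" by (simp add: A_def n_def tree_incidence_mat_def)
  have A: "A \<in> carrier_mat n n" by (simp add: A_eq)
  assume "det (tree_incidence_mat N h) = 0"
  then obtain x where x: "x \<in> carrier_vec n" "x \<noteq> 0\<^sub>v n" "A *\<^sub>v x = 0\<^sub>v n"
    using det_0_iff_vec_prod_zero[OF A] by (auto simp: A_def)
  define \<psi> where "\<psi> j = (if j < n then x $ j else 0)" for j
  have edge: "\<psi> (snd g) = \<psi> (fst g)" if "g \<in> T" for g
  proof -
    obtain i where i: "i < n" "g = h i"
      using h \<open>g \<in> T\<close> by (auto simp: bij_betw_def n_def)
    have gs: "g \<in> springs N" using that st by (auto simp: spanning_tree_def)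
    have "0 = (A *\<^sub>v x) $ i" using x i by simp
    also have "\<dots> = (\<Sum>j<n. incid j g * x $ j)"
      using x(1) i A by (simp add: A_eq scalar_prod_def lessThan_atLeast0 algebra_simps)
    also have "\<dots> = (\<Sum>j<N. incid j g * \<psi> j)"
    proof -
      have "{..<N} = insert n {..<n}" using N by (auto simp: n_def)
      then show ?thesis by (simp add: \<psi>_def)
    qed
    finally show ?thesis using sum_incid_mult[OF gs] by simp
  qed
  have \<psi>_const: "\<psi> u = \<psi> n" if "u < N" for u
    using spanning_tree_potential_const[OF st edge that] N by (simp add: n_def)
  have "x $ i = 0" if "i < n" for i
    using \<psi>_const[of i] that by (simp add: \<psi>_def n_def)
  then have "x = 0\<^sub>v n"
    using x(1) by (intro eq_vecI) auto
  with x(2) show False by simp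
qed

lemma tree_supported_flow_eq_0:
  assumes st: "spanning_tree N T" and N: "N \<ge> 1"
    and off_tree: "\<And>g. g \<in> springs N - T \<Longrightarrow> r g = 0"
    and div_free: "\<And>v. v < N \<Longrightarrow> divergence N r v = 0"
    and "g \<in> T"
  shows "r g = 0"
proof -
  define n where "n = N - 1"
  have Tsub: "T \<subseteq> springs N" and cT: "card T = n"
    using st by (auto simp: spanning_tree_def n_def)
  obtain h where h: "bij_betw h {..<n} T"
    using ex_bij_betw_nat_finite[OF finite_subset[OF Tsub finite_springs]] cT
    by (auto simp: lessThan_atLeast0)
  define A where "A = tree_incidence_mat N h"
  have At: "A\<^sup>T \<in> carrier_mat n n" by (simp add: A_def n_def tree_incidence_mat_def)
  have "det (A\<^sup>T) \<noteq> 0"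
    using det_tree_incidence_mat[OF st N h[unfolded n_def]] det_transpose[of A n]
    by (simp add: A_def tree_incidence_mat_def n_def)
  moreover define y where "y = vec n (\<lambda>i. r (h i))"
  have "A\<^sup>T *\<^sub>v y = 0\<^sub>v n"
  proof (rule eq_vecI)
    fix j assume "j < dim_vec (0\<^sub>v n :: real vec)"
    then have j: "j < n" by simp
    have "(A\<^sup>T *\<^sub>v y) $ j = (\<Sum>i<n. incid j (h i) * r (h i))"
      using j by (simp add: A_def tree_incidence_mat_def n_def y_def scalar_prod_def lessThan_atLeast0)
    also have "\<dots> = (\<Sum>g\<in>T. incid j g * r g)"
      using sum.reindex_bij_betw[OF h, of "\<lambda>g. incid j g * r g"] by simp
    also have "\<dots> = divergence N r j"
      unfolding divergence_def by (rule sum.mono_neutral_left) (use Tsub off_tree in auto)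
    finally show "(A\<^sup>T *\<^sub>v y) $ j = (0\<^sub>v n :: real vec) $ j"
      using div_free[of j] j by (simp add: n_def)
  qed (simp add: A_def tree_incidence_mat_def n_def)
  ultimately have "y = 0\<^sub>v n"
    using det_0_iff_vec_prod_zero[OF At] by (metis carrier_vec_dim_vec dim_vec y_def)
  moreover obtain i where "i < n" "g = h i"
    using h \<open>g \<in> T\<close> by (auto simp: bij_betw_def)
  ultimately show ?thesis by (metis index_vec index_zero_vec(1) y_def)
qed

(* A divergence-free flow is a combination of the fundamental cycles: subtracting that
   combination leaves a divergence-free flow supported on the tree, which vanishes. *)
lemma cycle_part_orthogonal:
  assumes st: "spanning_tree N T" and fc: "fund_cycle_matrix N T Cm" and N: "N \<ge> 1"
    and d: "\<And>f. f \<in> springs N - T \<Longrightarrow> (\<Sum>g\<in>springs N. Cm f g * d g) = 0"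
  shows "(\<Sum>g\<in>springs N. cycle_part N lb g * d g) = 0"
proof -
  define c where "c f = cycle_part N lb f * Cm f f" for f
  define r where "r g = cycle_part N lb g - (\<Sum>f\<in>springs N - T. c f * Cm f g)" for g
  have Cm_val: "\<And>f g. f \<in> springs N - T \<Longrightarrow> Cm f g \<in> {-1, 0, 1}"
    and Cm_supp: "\<And>f g. f \<in> springs N - T \<Longrightarrow> g \<notin> T \<union> {f} \<Longrightarrow> Cm f g = 0"
    and Cm_diag: "\<And>f. f \<in> springs N - T \<Longrightarrow> Cm f f \<noteq> 0"
    and Cm_cycle: "\<And>f v. f \<in> springs N - T \<Longrightarrow> v < N \<Longrightarrow> (\<Sum>g\<in>springs N. incid v g * Cm f g) = 0"
    using fc unfolding fund_cycle_matrix_def by blast+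
  have off_tree: "r g = 0" if g: "g \<in> springs N - T" for g
  proof -
    have "(\<Sum>f\<in>springs N - T. c f * Cm f g) = c g * Cm g g + (\<Sum>f\<in>springs N - T - {g}. c f * Cm f g)"
      using g by (simp add: sum.remove)
    also have "(\<Sum>f\<in>springs N - T - {g}. c f * Cm f g) = 0"
    proof (rule sum.neutral, rule ballI)
      fix f assume "f \<in> springs N - T - {g}"
      then have "Cm f g = 0" using g by (intro Cm_supp) auto
      then show "c f * Cm f g = 0" by simp
    qed
    also have "Cm g g * Cm g g = 1" using Cm_val[OF g, of g] Cm_diag[OF g] by auto
    then have "c g * Cm g g = cycle_part N lb g" by (simp add: c_def mult.assoc)
    finally show ?thesis by (simp add: r_def)
  qed
  have div_free: "divergence N r v = 0" if v: "v < N" for v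
  proof -
    have "divergence N r v = divergence N (cycle_part N lb) v
        - (\<Sum>g\<in>springs N. \<Sum>f\<in>springs N - T. c f * (incid v g * Cm f g))"
      unfolding divergence_def r_def
      by (simp add: sum_subtractf right_diff_distrib sum_distrib_left algebra_simps)
    also have "(\<Sum>g\<in>springs N. \<Sum>f\<in>springs N - T. c f * (incid v g * Cm f g))
        = (\<Sum>f\<in>springs N - T. c f * (\<Sum>g\<in>springs N. incid v g * Cm f g))"
      by (subst sum.swap) (simp add: sum_distrib_left)
    finally show ?thesis using divergence_cycle_part[OF v] Cm_cycle v by simp
  qed
  have "cycle_part N lb g = (\<Sum>f\<in>springs N - T. c f * Cm f g)" if "g \<in> springs N" for g
    using tree_supported_flow_eq_0[OF st N off_tree div_free] off_tree that
    by (cases "g \<in> T") (auto simp: r_def)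
  then have "(\<Sum>g\<in>springs N. cycle_part N lb g * d g)
      = (\<Sum>g\<in>springs N. \<Sum>f\<in>springs N - T. c f * (Cm f g * d g))"
    by (intro sum.cong refl) (simp add: sum_distrib_right mult.assoc)
  also have "\<dots> = (\<Sum>f\<in>springs N - T. c f * (\<Sum>g\<in>springs N. Cm f g * d g))"
    by (subst sum.swap) (simp add: sum_distrib_left)
  also have "\<dots> = 0" using d by simp
  finally show ?thesis .
qed

lemma relaxed_len_eq_cycle_part:
  assumes st: "spanning_tree N T" and fc: "fund_cycle_matrix N T Cm" and N: "N \<ge> 1"
  shows "relaxed_len N T Cm lb = cycle_part N lb"
proof -
  let ?l = "cycle_part N lb"
  let ?adm = "\<lambda>l. (\<forall>g. g \<notin> springs N \<longrightarrow> l g = 0) \<and> same_windings N T Cm l lb"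
  let ?E = "\<lambda>l. \<Sum>g\<in>springs N. (l g)\<^sup>2 / 2"
  have adm: "?adm ?l"
    using same_windings_cycle_part[OF fc] by (simp add: cycle_part_def)
  have pythagoras: "?E l = ?E ?l + ?E (\<lambda>g. l g - ?l g)" if "?adm l" for l
  proof -
    have orth: "(\<Sum>g\<in>springs N. ?l g * (l g - ?l g)) = 0"
      using that adm
      by (intro cycle_part_orthogonal[OF st fc N]) (simp add: same_windings_def right_diff_distrib sum_subtractf)
    have "(\<Sum>g\<in>springs N. (l g)\<^sup>2)
        = (\<Sum>g\<in>springs N. (?l g)\<^sup>2 + 2 * (?l g * (l g - ?l g)) + (l g - ?l g)\<^sup>2)"
      by (rule sum.cong) (auto simp: power2_eq_square algebra_simps)
    also have "\<dots> = (\<Sum>g\<in>springs N. (?l g)\<^sup>2) + 2 * (\<Sum>g\<in>springs N. ?l g * (l g - ?l g))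
        + (\<Sum>g\<in>springs N. (l g - ?l g)\<^sup>2)"
      by (simp add: sum.distrib sum_distrib_left)
    finally show ?thesis
      using orth by (simp add: sum_divide_distrib[symmetric] add_divide_distrib)
  qed
  have excess_nonneg: "?E (\<lambda>g. l g - ?l g) \<ge> 0" for l
    by (simp add: sum_nonneg)
  show ?thesis
    unfolding relaxed_len_def
  proof (rule the_equality)
    show "(\<forall>g. g \<notin> springs N \<longrightarrow> ?l g = 0) \<and> same_windings N T Cm ?l lb
        \<and> (\<forall>l'. ?adm l' \<longrightarrow> ?E ?l \<le> ?E l')"
    proof (intro conjI allI impI)
      fix l' assume "?adm l'"
      from pythagoras[OF this] excess_nonneg[of l'] show "?E ?l \<le> ?E l'" by linarith
    qed (use adm in auto)
  next
    fix l assume l: "(\<forall>g. g \<notin> springs N \<longrightarrow> l g = 0) \<and> same_windings N T Cm l lb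
        \<and> (\<forall>l'. ?adm l' \<longrightarrow> ?E l \<le> ?E l')"
    then have le: "?E l \<le> ?E ?l" and adm_l: "?adm l" using adm by auto
    have "?E (\<lambda>g. l g - ?l g) = 0"
      using le pythagoras[OF adm_l] excess_nonneg[of l] by linarith
    then have "\<forall>g\<in>springs N. l g = ?l g"
      by (subst (asm) sum_nonneg_eq_0_iff) auto
    then show "l = ?l"
      using l adm by (auto simp: fun_eq_iff)
  qed
qed

section \<open>The relaxation of a conditioned spring\<close>

lemma srep_add_of_int: "srep (t + of_int k) = srep t"
proof -
  have "\<lfloor>t + of_int k + 1/2\<rfloor> = \<lfloor>t + 1/2\<rfloor> + k"
    by (metis add.commute add.left_commute floor_add_int)
  then show ?thesis by (simp add: srep_def)
qed

lemma srep_eqI: "t' = t + of_int k \<Longrightarrow> srep t' = srep t"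
  by (simp add: srep_add_of_int)

lemma srep_eq_self: "-1/2 \<le> t \<Longrightarrow> t < 1/2 \<Longrightarrow> srep t = t"
  by (simp add: srep_def floor_eq_iff)

(* the hypothesis excludes the half-integers, where srep t = -1/2 *)
lemma srep_minus:
  assumes "frac (t + 1/2) \<noteq> 0"
  shows "srep (- t) = - srep t"
proof -
  define k where "k = \<lfloor>t + 1/2\<rfloor>"
  have "of_int k \<le> t + 1/2" "t + 1/2 < of_int k + 1" unfolding k_def by linarith+
  moreover have "t + 1/2 \<noteq> of_int k" using assms by (auto simp: frac_def k_def)
  ultimately have "\<lfloor>- t + 1/2\<rfloor> = - k"
    unfolding floor_eq_iff by simp
  then show ?thesis by (simp add: srep_def k_def)
qed

lemma srep_measurable [measurable]: "srep \<in> borel_measurable borel"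
  unfolding srep_def by measurable

lemma frac_measurable [measurable]: "(frac :: real \<Rightarrow> real) \<in> borel_measurable borel"
  unfolding frac_def by measurable

(* the term of the spring between v and c in divergence (init_len x) v *)
definition incid_len :: "(nat \<Rightarrow> real) \<Rightarrow> nat \<Rightarrow> nat \<Rightarrow> real" where
  "incid_len x v c = (if c < v then srep (x v - x c) else - srep (x c - x v))"

lemma divergence_init_len:
  assumes "v < N"
  shows "divergence N (init_len x) v = (\<Sum>c\<in>{..<N} - {v}. incid_len x v c)"
proof -
  have "divergence N (init_len x) v = (\<Sum>c<v. incid_len x v c) + (\<Sum>c\<in>{v<..<N}. incid_len x v c)"
    unfolding divergence_def sum_springs_incid[OF assms]
    by (simp add: init_len_def incid_len_def sum_negf)
  also have "\<dots> = (\<Sum>c\<in>{..<v} \<union> {v<..<N}. incid_len x v c)"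
    by (rule sum.union_disjoint[symmetric]) auto
  also have "{..<v} \<union> {v<..<N} = {..<N} - {v}" using assms by auto
  finally show ?thesis .
qed

lemma delta_len_cond_config:
  assumes st: "spanning_tree N T" and fc: "fund_cycle_matrix N T Cm"
    and ab: "a < b" "b < N" and ell: "\<bar>ell\<bar> < 1/2"
  shows "delta_len N T Cm (cond_config a b ell x) (a, b)
     = - (2 * ell + (\<Sum>c\<in>{..<N} - {a, b}.
            incid_len (cond_config a b ell x) b c - incid_len (cond_config a b ell x) a c)) / real N"
proof -
  define y where "y = cond_config a b ell x"
  define J where "J = {..<N} - {a, b}"
  have fin: "finite J" by (simp add: J_def)
  have ell_ab: "srep (y b - y a) = ell"
  proof -
    have "srep (y b - y a) = srep ell"
      using ab by (intro srep_eqI[where k = "- \<lfloor>x a + ell\<rfloor>"]) (simp add: y_def cond_config_def frac_def)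
    then show ?thesis using ell by (simp add: srep_eq_self)
  qed
  have "delta_len N T Cm y (a, b) = - (divergence N (init_len y) b - divergence N (init_len y) a) / real N"
    using ab by (simp add: delta_len_def relaxed_len_eq_cycle_part[OF st fc] cycle_part_def
        springs_def minus_divide_left)
  moreover have "divergence N (init_len y) b = ell + (\<Sum>c\<in>J. incid_len y b c)"
  proof -
    have "{..<N} - {b} = insert a J" "a \<notin> J" using ab by (auto simp: J_def)
    then show ?thesis using ab ell_ab fin by (simp add: divergence_init_len incid_len_def)
  qed
  moreover have "divergence N (init_len y) a = - ell + (\<Sum>c\<in>J. incid_len y a c)"
  proof -
    have "{..<N} - {a} = insert b J" "b \<notin> J" using ab by (auto simp: J_def)
    then show ?thesis using ab ell_ab fin by (simp add: divergence_init_len incid_len_def)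
  qed
  ultimately show ?thesis
    by (simp add: y_def J_def sum_subtractf)
qed

(* u is the position of node c relative to node a; N Delta l_e is the sum of node_term ell u_c
   over the nodes c other than a and b, minus 2 ell *)
definition node_term :: "real \<Rightarrow> real \<Rightarrow> real" where
  "node_term ell u = srep (- frac u) - srep (ell - frac u)"

lemma incid_len_cond_config:
  assumes ab: "a < b" and c: "c \<noteq> a" "c \<noteq> b"
    and nondeg: "frac (frac (x c - x a) + 1/2) \<noteq> 0" "frac (frac (x c - x a) - ell + 1/2) \<noteq> 0"
  shows "incid_len (cond_config a b ell x) b c - incid_len (cond_config a b ell x) a c
       = - node_term ell (frac (x c - x a))"
proof -
  define u where "u = frac (x c - x a)"
  define y where "y = cond_config a b ell x"
  have y: "y a = x a" "y b = frac (x a + ell)" "y c = x c"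
    using ab c by (auto simp: y_def cond_config_def)
  have "incid_len y b c = srep (ell - u)"
  proof (cases "c < b")
    case True
    then show ?thesis
      by (simp add: incid_len_def y, intro srep_eqI[where k = "- \<lfloor>x a + ell\<rfloor> - \<lfloor>x c - x a\<rfloor>"])
        (simp add: u_def frac_def)
  next
    case False
    have "srep (ell - u) = - srep (u - ell)"
      using srep_minus[of "u - ell"] nondeg(2) by (simp add: u_def)
    moreover have "srep (x c - frac (x a + ell)) = srep (u - ell)"
      by (rule srep_eqI[where k = "\<lfloor>x a + ell\<rfloor> + \<lfloor>x c - x a\<rfloor>"]) (simp add: u_def frac_def)
    ultimately show ?thesis using False by (simp add: incid_len_def y)
  qed
  moreover have "incid_len y a c = srep (- u)"
  proof (cases "c < a")
    case True
    then show ?thesis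
      by (simp add: incid_len_def y, intro srep_eqI[where k = "- \<lfloor>x c - x a\<rfloor>"]) (simp add: u_def frac_def)
  next
    case False
    have "srep (- u) = - srep u" by (rule srep_minus) (use nondeg(1) in \<open>simp add: u_def\<close>)
    moreover have "srep (x c - x a) = srep u"
      by (rule srep_eqI[where k = "\<lfloor>x c - x a\<rfloor>"]) (simp add: u_def frac_def)
    ultimately show ?thesis using False by (simp add: incid_len_def y)
  qed
  ultimately show ?thesis by (simp add: node_term_def u_def y_def)
qed

lemma delta_len_eq_sum_node_term:
  assumes st: "spanning_tree N T" and fc: "fund_cycle_matrix N T Cm"
    and ab: "a < b" "b < N" and ell: "\<bar>ell\<bar> < 1/2"
    and nondeg: "\<forall>c\<in>{..<N} - {a, b}.
      frac (frac (x c - x a) + 1/2) \<noteq> 0 \<and> frac (frac (x c - x a) - ell + 1/2) \<noteq> 0"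
  shows "delta_len N T Cm (cond_config a b ell x) (a, b)
       = ((\<Sum>c\<in>{..<N} - {a, b}. node_term ell (frac (x c - x a))) - 2 * ell) / real N"
proof -
  have "incid_len (cond_config a b ell x) b c - incid_len (cond_config a b ell x) a c
      = - node_term ell (frac (x c - x a))" if "c \<in> {..<N} - {a, b}" for c
    using that nondeg by (intro incid_len_cond_config[OF ab(1)]) auto
  then have "(\<Sum>c\<in>{..<N} - {a, b}. incid_len (cond_config a b ell x) b c - incid_len (cond_config a b ell x) a c)
      = - (\<Sum>c\<in>{..<N} - {a, b}. node_term ell (frac (x c - x a)))"
    unfolding sum_negf[symmetric] by (rule sum.cong[OF refl])
  then show ?thesis
    by (simp add: delta_len_cond_config[OF st fc ab ell] diff_divide_distrib minus_divide_left)
qed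

lemma srep_sub_unit_interval:
  assumes "\<bar>ell\<bar> < 1/2" "0 \<le> v" "v < 1"
  shows "srep (ell - v) = ell - v + (if v > ell + 1/2 then 1 else 0)"
proof (cases "v > ell + 1/2")
  case True
  have "srep (ell - v) = srep (ell - v + 1)" by (rule srep_eqI[where k = "-1"]) simp
  then show ?thesis using assms True by (simp add: srep_eq_self)
qed (use assms in \<open>simp add: srep_eq_self\<close>)

(* node_term ell jumps from -ell to sgn ell - ell on a half-open arc of length |ell| *)
definition jump_set :: "real \<Rightarrow> real set" where
  "jump_set ell = frac -` {min (1/2) (ell + 1/2) <.. max (1/2) (ell + 1/2)}"

lemma node_term_eq:
  assumes "0 < \<bar>ell\<bar>" "\<bar>ell\<bar> < 1/2"
  shows "node_term ell u = - ell + sgn ell * indicator (jump_set ell) u"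
proof -
  have v: "0 \<le> frac u" "frac u < 1" by (auto simp: frac_lt_1)
  have "node_term ell u
      = - ell + (if frac u > 1/2 then 1 else 0) - (if frac u > ell + 1/2 then 1 else 0)"
    using srep_sub_unit_interval[OF assms(2) v] srep_sub_unit_interval[of 0, OF _ v]
    by (simp add: node_term_def)
  then show ?thesis
    using assms by (cases "ell > 0") (auto simp: jump_set_def indicator_def)
qed

section \<open>The uniform law on the circle and the shear\<close>

definition unif01 :: "real measure" where "unif01 = uniform_measure lborel {0..<1}"

lemma prob_space_unif01: "prob_space unif01"
  unfolding unif01_def by (rule prob_space_uniform_measure) auto

lemma sets_unif01 [simp, measurable_cong]: "sets unif01 = sets borel"
  by (simp add: unif01_def)

lemma space_unif01 [simp]: "space unif01 = UNIV"
  by (simp add: unif01_def)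

lemma emeasure_unif01: "B \<in> sets borel \<Longrightarrow> emeasure unif01 B = emeasure lborel ({0..<1} \<inter> B)"
  unfolding unif01_def by (subst emeasure_uniform_measure) (auto simp: divide_ennreal_def)

lemma emeasure_lborel_translate: "S \<in> sets borel \<Longrightarrow> emeasure lborel ((\<lambda>t. c + t) -` S) = emeasure lborel (S::real set)"
proof -
  assume S: "S \<in> sets borel"
  have "emeasure (distr lborel borel ((+) c)) S = emeasure lborel ((+) c -` S \<inter> space lborel)"
    using S by (intro emeasure_distr) auto
  then show ?thesis by (simp add: lborel_distr_plus)
qed

lemma frac_eq_self: "0 \<le> v \<Longrightarrow> v < 1 \<Longrightarrow> frac v = v"
  by (simp add: frac_eq)

lemma frac_eq_add_1: "-1 \<le> v \<Longrightarrow> v < 0 \<Longrightarrow> frac v = v + 1"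
  using frac_1_eq[of v] frac_eq_self[of "v + 1"] by simp

lemma unit_interval_frac_shift_preimage:
  assumes z: "0 \<le> z" "z < 1"
  shows "{0..<1} \<inter> {t. frac (t - z) \<in> B}
       = (\<lambda>t. - z + t) -` (B \<inter> {0..<1 - z}) \<union> (\<lambda>t. (1 - z) + t) -` (B \<inter> {1 - z..<1})"
    (is "_ = ?A1 \<union> ?A2")
proof (intro equalityI subsetI)
  fix t assume t: "t \<in> {0..<1} \<inter> {t. frac (t - z) \<in> B}"
  show "t \<in> ?A1 \<union> ?A2"
  proof (cases "z \<le> t")
    case True
    then have "frac (t - z) = - z + t" using t z by (simp add: frac_eq_self)
    then show ?thesis using t True by simp
  next
    case False
    then have "frac (t - z) = (1 - z) + t" using t z frac_eq_add_1[of "t - z"] by simp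
    then show ?thesis using t z False by simp
  qed
next
  fix t assume "t \<in> ?A1 \<union> ?A2"
  then show "t \<in> {0..<1} \<inter> {t. frac (t - z) \<in> B}"
  proof
    assume t: "t \<in> ?A1"
    then have "frac (t - z) = - z + t" using z by (simp add: frac_eq_self)
    then show ?thesis using t z by simp
  next
    assume t: "t \<in> ?A2"
    then have "frac (t - z) = (1 - z) + t" using z frac_eq_add_1[of "t - z"] by simp
    then show ?thesis using t z by simp
  qed
qed

lemma emeasure_unif01_frac_shift:
  assumes B: "B \<in> sets borel"
  shows "emeasure unif01 {t. frac (t - y) \<in> B} = emeasure unif01 B"
proof -
  define z where "z = frac y"
  have z: "0 \<le> z" "z < 1" by (auto simp: z_def frac_lt_1)
  have shift: "frac (t - y) = frac (t - z)" for t unfolding z_def by (metis frac_diff_simp)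
  have "(\<lambda>t. frac (t - y)) -` B \<inter> space borel \<in> sets borel"
    using B by (intro measurable_sets[of _ borel borel]) auto
  then have meas: "{t. frac (t - y) \<in> B} \<in> sets borel" by (simp add: vimage_def)
  have B1: "B \<inter> {0..<1 - z} \<in> sets borel" and B2: "B \<inter> {1 - z..<1} \<in> sets borel"
    using B by auto
  have "emeasure unif01 {t. frac (t - y) \<in> B}
      = emeasure lborel ((\<lambda>t. - z + t) -` (B \<inter> {0..<1 - z}) \<union> (\<lambda>t. (1 - z) + t) -` (B \<inter> {1 - z..<1}))"
    using meas by (simp add: emeasure_unif01 shift unit_interval_frac_shift_preimage[OF z])
  also have "\<dots> = emeasure lborel ((\<lambda>t. - z + t) -` (B \<inter> {0..<1 - z}))
      + emeasure lborel ((\<lambda>t. (1 - z) + t) -` (B \<inter> {1 - z..<1}))"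
    using measurable_sets_borel[OF _ B1, of "\<lambda>t. - z + t"] measurable_sets_borel[OF _ B2, of "\<lambda>t. (1 - z) + t"]
    by (intro plus_emeasure[symmetric]) auto
  also have "\<dots> = emeasure lborel (B \<inter> {0..<1 - z}) + emeasure lborel (B \<inter> {1 - z..<1})"
    by (simp only: emeasure_lborel_translate[OF B1] emeasure_lborel_translate[OF B2])
  also have "\<dots> = emeasure lborel ((B \<inter> {0..<1 - z}) \<union> (B \<inter> {1 - z..<1}))"
    using B1 B2 by (intro plus_emeasure) auto
  also have "(B \<inter> {0..<1 - z}) \<union> (B \<inter> {1 - z..<1}) = {0..<1} \<inter> B" using z by auto
  finally show ?thesis using B by (simp add: emeasure_unif01)
qed

definition shear :: "nat \<Rightarrow> nat \<Rightarrow> (nat \<Rightarrow> real) \<Rightarrow> (nat \<Rightarrow> real)" where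
  "shear N a x = (\<lambda>c\<in>{..<N}. if c = a then x a else frac (x c - x a))"

lemma node_law_unif01: "node_law N = PiM {..<N} (\<lambda>_. unif01)"
  by (simp add: node_law_def unif01_def)

lemma measurable_unif01_iff [simp]: "measurable M unif01 = borel_measurable M"
  by (rule measurable_cong_sets) simp_all

lemma measurable_component_unif01:
  "(\<lambda>x. x c) \<in> borel_measurable (PiM {..<N} (\<lambda>_::nat. unif01))"
proof (cases "c < N")
  case True
  then show ?thesis
    using measurable_component_singleton[of c "{..<N}" "\<lambda>_. unif01"] by simp
next
  case False
  have "(\<lambda>x. undefined::real) \<in> borel_measurable (PiM {..<N} (\<lambda>_::nat. unif01))" by simp
  moreover have "undefined = x c" if "x \<in> space (PiM {..<N} (\<lambda>_::nat. unif01))" for x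
    using False that by (auto simp: space_PiM PiE_def extensional_def)
  ultimately show ?thesis by (rule measurable_cong[THEN iffD1, rotated])
qed

lemma shear_measurable [measurable]:
  "shear N a \<in> measurable (PiM {..<N} (\<lambda>_. unif01)) (PiM {..<N} (\<lambda>_. unif01))"
  unfolding shear_def
proof (rule measurable_restrict)
  note measurable_component_unif01 [measurable]
  fix c
  show "(\<lambda>x. if c = a then x a else frac (x c - x a)) \<in> measurable (PiM {..<N} (\<lambda>_. unif01)) unif01"
    by (cases "c = a"; simp; measurable)
qed

lemma shear_fun_upd_in_PiE_iff:
  assumes "a < N" "x \<in> extensional ({..<N} - {a})"
  shows "shear N a (x(a := y)) \<in> Pi\<^sub>E {..<N} A
     \<longleftrightarrow> y \<in> A a \<and> x \<in> Pi\<^sub>E ({..<N} - {a}) (\<lambda>c. {t. frac (t - y) \<in> A c})"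
proof -
  have shear_upd: "shear N a (x(a := y)) = (\<lambda>c\<in>{..<N}. if c = a then y else frac (x c - y))"
    by (auto simp: shear_def fun_eq_iff)
  have "shear N a (x(a := y)) \<in> Pi\<^sub>E {..<N} A
      \<longleftrightarrow> (\<forall>c<N. (if c = a then y else frac (x c - y)) \<in> A c)"
    unfolding shear_upd restrict_PiE_iff by auto
  also have "\<dots> \<longleftrightarrow> y \<in> A a \<and> (\<forall>c\<in>{..<N} - {a}. frac (x c - y) \<in> A c)"
    using assms(1) by auto
  finally show ?thesis
    using assms(2) by (auto simp: PiE_def)
qed

lemma emeasure_PiM_unif01_frac_shift:
  assumes "finite I" "\<And>c. c \<in> I \<Longrightarrow> A c \<in> sets borel"
  shows "emeasure (PiM I (\<lambda>_. unif01)) (Pi\<^sub>E I (\<lambda>c. {t. frac (t - y) \<in> A c}))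
       = (\<Prod>c\<in>I. emeasure unif01 (A c))"
proof -
  interpret product_prob_space "\<lambda>_. unif01" by (rule product_prob_spaceI) (rule prob_space_unif01)
  have "{t. frac (t - y) \<in> A c} \<in> sets unif01" if "c \<in> I" for c
  proof -
    have "(\<lambda>t. frac (t - y)) -` A c \<inter> space borel \<in> sets borel"
      using assms(2)[OF that] by (intro measurable_sets[of _ borel borel]) auto
    then show ?thesis by (simp add: vimage_def)
  qed
  then have "emeasure (PiM I (\<lambda>_. unif01)) (Pi\<^sub>E I (\<lambda>c. {t. frac (t - y) \<in> A c}))
      = (\<Prod>c\<in>I. emeasure unif01 {t. frac (t - y) \<in> A c})"
    using assms(1) by (intro emeasure_PiM) auto
  also have "\<dots> = (\<Prod>c\<in>I. emeasure unif01 (A c))"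
    by (intro prod.cong refl) (simp add: emeasure_unif01_frac_shift assms(2))
  finally show ?thesis .
qed

(* Integrating out x_a first, the remaining coordinates are rotated by -x_a, which
   preserves their uniform product law. *)
lemma distr_shear:
  assumes aN: "a < N"
  shows "distr (PiM {..<N} (\<lambda>_. unif01)) (PiM {..<N} (\<lambda>_. unif01)) (shear N a) = PiM {..<N} (\<lambda>_. unif01)"
proof -
  interpret product_prob_space "\<lambda>_::nat. unif01" by (rule product_prob_spaceI) (rule prob_space_unif01)
  define M where "M = PiM {..<N} (\<lambda>_::nat. unif01)"
  define I' where "I' = {..<N} - {a}"
  have NI: "{..<N} = insert a I'" "a \<notin> I'" "finite I'" using aN by (auto simp: I'_def)
  show ?thesis
  proof (rule PiM_eqI)
    fix A assume A: "\<And>i. i \<in> {..<N} \<Longrightarrow> A i \<in> sets unif01"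
    define X where "X = shear N a -` Pi\<^sub>E {..<N} A \<inter> space M"
    define By where "By y = Pi\<^sub>E I' (\<lambda>c. {t. frac (t - y) \<in> A c})" for y
    have box: "Pi\<^sub>E {..<N} A \<in> sets M" unfolding M_def using A by (intro sets_PiM_I_finite) auto
    have "X \<in> sets M"
      unfolding X_def M_def using box[unfolded M_def] by (rule measurable_sets[OF shear_measurable])
    then have X: "X \<in> sets (PiM (insert a I') (\<lambda>_. unif01))" by (simp add: M_def NI(1))
    have By: "By y \<in> sets (PiM I' (\<lambda>_. unif01))" for y
    proof -
      have "(\<lambda>t. frac (t - y)) -` A c \<inter> space borel \<in> sets borel" if "c \<in> I'" for c
        using A[of c] that by (intro measurable_sets[of _ borel borel]) (auto simp: I'_def)
      then show ?thesis unfolding By_def using NI(3) by (intro sets_PiM_I_finite) (auto simp: vimage_def)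
    qed
    have slice: "(\<integral>\<^sup>+ x. indicator X (x(a := y)) \<partial>PiM I' (\<lambda>_. unif01))
        = indicator (A a) y * (\<Prod>c\<in>I'. emeasure unif01 (A c))" for y
    proof -
      have "indicator X (x(a := y)) = (indicator (A a) y * indicator (By y) x :: ennreal)"
        if "x \<in> space (PiM I' (\<lambda>_. unif01))" for x
      proof -
        have "x \<in> extensional I'" "x(a := y) \<in> space M"
          using that NI by (auto simp: M_def space_PiM PiE_def extensional_def)
        then have "x(a := y) \<in> X \<longleftrightarrow> y \<in> A a \<and> x \<in> By y"
          using shear_fun_upd_in_PiE_iff[OF aN, of x y A] by (simp add: X_def By_def I'_def)
        then show ?thesis by (simp add: indicator_def)
      qed
      then have "(\<integral>\<^sup>+ x. indicator X (x(a := y)) \<partial>PiM I' (\<lambda>_. unif01))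
          = (\<integral>\<^sup>+ x. indicator (A a) y * indicator (By y) x \<partial>PiM I' (\<lambda>_. unif01))"
        by (rule nn_integral_cong)
      also have "\<dots> = indicator (A a) y * emeasure (PiM I' (\<lambda>_. unif01)) (By y)"
        using By by (rule nn_integral_cmult_indicator)
      also have "emeasure (PiM I' (\<lambda>_. unif01)) (By y) = (\<Prod>c\<in>I'. emeasure unif01 (A c))"
        unfolding By_def using A NI(3) by (intro emeasure_PiM_unif01_frac_shift) (auto simp: I'_def)
      finally show ?thesis .
    qed
    have "emeasure M X = (\<integral>\<^sup>+ y. \<integral>\<^sup>+ x. indicator X (x(a := y)) \<partial>PiM I' (\<lambda>_. unif01) \<partial>unif01)"
      using product_nn_integral_insert_rev[OF NI(3) NI(2) borel_measurable_indicator[OF X]] X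
      by (simp add: M_def NI(1))
    also have "\<dots> = (\<integral>\<^sup>+ y. indicator (A a) y * (\<Prod>c\<in>I'. emeasure unif01 (A c)) \<partial>unif01)"
      by (simp add: slice)
    also have "\<dots> = (\<Prod>c\<in>{..<N}. emeasure unif01 (A c))"
      using A aN NI by (subst nn_integral_multc) (auto intro!: borel_measurable_indicator)
    finally show "emeasure (distr (PiM {..<N} (\<lambda>_. unif01)) (PiM {..<N} (\<lambda>_. unif01)) (shear N a)) (Pi\<^sub>E {..<N} A)
        = (\<Prod>i\<in>{..<N}. emeasure unif01 (A i))"
      using box unfolding X_def M_def by (subst emeasure_distr) auto
  qed simp_all
qed

section \<open>The law of a node term\<close>

definition node_term_law :: "real \<Rightarrow> real measure" where
  "node_term_law ell = distr unif01 borel (node_term ell)"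

lemma node_term_measurable [measurable]: "node_term ell \<in> borel_measurable borel"
  unfolding node_term_def by measurable

lemma prob_space_node_term_law: "prob_space (node_term_law ell)"
  unfolding node_term_law_def
  by (intro prob_space.prob_space_distr prob_space_unif01)
    (simp add: measurable_cong_sets[OF sets_unif01 refl])

lemma sets_node_term_law [simp, measurable_cong]: "sets (node_term_law ell) = sets borel"
  by (simp add: node_term_law_def)

lemma jump_set_borel [measurable]: "jump_set ell \<in> sets borel"
  unfolding jump_set_def by (rule measurable_sets_borel[OF frac_measurable]) simp

lemma node_term_measurable_law: "node_term ell \<in> measurable unif01 (node_term_law ell)"
  by (simp add: measurable_cong_sets[OF sets_unif01 sets_node_term_law])

lemma measure_jump_set:
  assumes "\<bar>ell\<bar> < 1/2"
  shows "measure unif01 (jump_set ell) = \<bar>ell\<bar>"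
proof -
  define lo where "lo = min (1/2) (ell + 1/2)"
  define hi where "hi = max (1/2) (ell + 1/2)"
  have lh: "0 \<le> lo" "lo \<le> hi" "hi < 1" "hi - lo = \<bar>ell\<bar>" using assms by (auto simp: lo_def hi_def)
  have eq: "{0..<1} \<inter> jump_set ell = {lo<..hi}"
    using lh by (auto simp: jump_set_def lo_def[symmetric] hi_def[symmetric] frac_eq_self)
  have "measure unif01 (jump_set ell) = measure lborel ({0..<1} \<inter> jump_set ell) / measure lborel {0..<1::real}"
    unfolding unif01_def by (rule measure_uniform_measure) (auto simp: jump_set_borel)
  also have "\<dots> = \<bar>ell\<bar>" using lh by (simp add: eq)
  finally show ?thesis .
qed

lemma integral_node_term_law:
  fixes f :: "real \<Rightarrow> real"
  assumes ell: "0 < \<bar>ell\<bar>" "\<bar>ell\<bar> < 1/2" and f: "f \<in> borel_measurable borel"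
  shows "integrable (node_term_law ell) f"
    and "integral\<^sup>L (node_term_law ell) f = f (- ell) + \<bar>ell\<bar> * (f (sgn ell - ell) - f (- ell))"
proof -
  interpret prob_space unif01 by (rule prob_space_unif01)
  have node_term_meas: "node_term ell \<in> measurable unif01 borel"
    by (simp add: measurable_cong_sets[OF sets_unif01 refl])
  have f_node_term: "f (node_term ell u)
      = f (- ell) + indicator (jump_set ell) u * (f (sgn ell - ell) - f (- ell))" for u
    by (simp add: node_term_eq[OF ell] indicator_def)
  have const: "integrable unif01 (\<lambda>u. f (- ell))" by simp
  have jump: "integrable unif01 (\<lambda>u. indicator (jump_set ell) u * (f (sgn ell - ell) - f (- ell)))"
    by (intro integrable_mult_left integrable_real_indicator) (auto simp: less_top[symmetric] jump_set_borel)
  show "integrable (node_term_law ell) f"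
    using Bochner_Integration.integrable_add[OF const jump]
    by (simp add: node_term_law_def integrable_distr_eq[OF node_term_meas f] f_node_term)
  have "integral\<^sup>L (node_term_law ell) f = integral\<^sup>L unif01 (\<lambda>u. f (node_term ell u))"
    unfolding node_term_law_def by (rule integral_distr[OF node_term_meas f])
  also have "\<dots> = f (- ell) + measure unif01 (jump_set ell) * (f (sgn ell - ell) - f (- ell))"
    unfolding f_node_term Bochner_Integration.integral_add[OF const jump] by (simp add: prob_space[unfolded space_unif01])
  finally show "integral\<^sup>L (node_term_law ell) f = f (- ell) + \<bar>ell\<bar> * (f (sgn ell - ell) - f (- ell))"
    using measure_jump_set[OF ell(2)] by simp
qed

lemma node_term_law_moments:
  assumes ell: "0 < \<bar>ell\<bar>" "\<bar>ell\<bar> < 1/2"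
  shows "integrable (node_term_law ell) (\<lambda>t. t)" "integral\<^sup>L (node_term_law ell) (\<lambda>t. t) = 0"
    "integrable (node_term_law ell) (\<lambda>t. t\<^sup>2)"
    "integral\<^sup>L (node_term_law ell) (\<lambda>t. t\<^sup>2) = \<bar>ell\<bar> - ell\<^sup>2"
    "integrable (node_term_law ell) (\<lambda>t. \<bar>t\<bar> ^ 3)"
    "integral\<^sup>L (node_term_law ell) (\<lambda>t. \<bar>t\<bar> ^ 3) = (\<bar>ell\<bar> - ell\<^sup>2) * (ell\<^sup>2 + (1 - \<bar>ell\<bar>)\<^sup>2)"
proof -
  have "(\<lambda>t::real. t) \<in> borel_measurable borel" "(\<lambda>t::real. t\<^sup>2) \<in> borel_measurable borel"
    "(\<lambda>t::real. \<bar>t\<bar> ^ 3) \<in> borel_measurable borel"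
    by measurable
  note m1 = integral_node_term_law[OF ell this(1)]
    and m2 = integral_node_term_law[OF ell this(2)]
    and m3 = integral_node_term_law[OF ell this(3)]
  show "integrable (node_term_law ell) (\<lambda>t. t)" "integrable (node_term_law ell) (\<lambda>t. t\<^sup>2)"
    "integrable (node_term_law ell) (\<lambda>t. \<bar>t\<bar> ^ 3)"
    using m1 m2 m3 by auto
  show "integral\<^sup>L (node_term_law ell) (\<lambda>t. t) = 0"
    using m1 by (simp add: algebra_simps abs_mult_sgn)
  have "0 < ell \<or> ell < 0" using ell by auto
  then show "integral\<^sup>L (node_term_law ell) (\<lambda>t. t\<^sup>2) = \<bar>ell\<bar> - ell\<^sup>2"
    using m2 by (auto simp: power2_eq_square algebra_simps)
  have "0 < ell \<or> ell < 0" using ell by auto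
  then show "integral\<^sup>L (node_term_law ell) (\<lambda>t. \<bar>t\<bar> ^ 3) = (\<bar>ell\<bar> - ell\<^sup>2) * (ell\<^sup>2 + (1 - \<bar>ell\<bar>)\<^sup>2)"
  proof
    assume "0 < ell"
    moreover have "\<bar>1 - ell\<bar> = 1 - ell" using ell by auto
    ultimately show ?thesis using m3 by (simp add: power2_eq_square power3_eq_cube algebra_simps)
  next
    assume "ell < 0"
    moreover have "\<bar>- 1 - ell\<bar> = 1 + ell" using ell by auto
    ultimately show ?thesis using m3 by (simp add: power2_eq_square power3_eq_cube algebra_simps)
  qed
qed

section \<open>Sums of independent identically distributed variables\<close>

lemma
  fixes \<mu> :: "real measure" and f :: "real \<Rightarrow> real"
  assumes \<mu>: "prob_space \<mu>" "sets \<mu> = sets borel" and "i \<in> I"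
    and f: "f \<in> borel_measurable borel" "integrable \<mu> f"
  shows integrable_PiM_component: "integrable (PiM I (\<lambda>_. \<mu>)) (\<lambda>\<omega>. f (\<omega> i))"
    and integral_PiM_component: "integral\<^sup>L (PiM I (\<lambda>_. \<mu>)) (\<lambda>\<omega>. f (\<omega> i)) = integral\<^sup>L \<mu> f"
proof -
  have law: "distr (PiM I (\<lambda>_. \<mu>)) \<mu> (\<lambda>\<omega>. \<omega> i) = \<mu>"
    using \<mu>(1) \<open>i \<in> I\<close> by (rule distr_PiM_component)
  have comp: "(\<lambda>\<omega>. \<omega> i) \<in> measurable (PiM I (\<lambda>_. \<mu>)) \<mu>"
    using \<open>i \<in> I\<close> by (rule measurable_component_singleton)
  have f_meas: "f \<in> borel_measurable \<mu>"
    using f(1) by (simp add: measurable_cong_sets[OF \<mu>(2) refl])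
  show "integrable (PiM I (\<lambda>_. \<mu>)) (\<lambda>\<omega>. f (\<omega> i))"
    using integrable_distr_eq[OF comp f_meas] f(2) law by simp
  show "integral\<^sup>L (PiM I (\<lambda>_. \<mu>)) (\<lambda>\<omega>. f (\<omega> i)) = integral\<^sup>L \<mu> f"
    using integral_distr[OF comp f_meas] law by simp
qed

lemma
  fixes \<mu> :: "real measure"
  assumes \<mu>: "prob_space \<mu>" "sets \<mu> = sets borel" and I: "finite I" "i \<in> I" "j \<in> I" "i \<noteq> j"
    and mean: "integrable \<mu> (\<lambda>t. t)" "integral\<^sup>L \<mu> (\<lambda>t. t) = 0"
  shows integrable_PiM_mult_components: "integrable (PiM I (\<lambda>_. \<mu>)) (\<lambda>\<omega>. \<omega> i * \<omega> j)"
    and integral_PiM_mult_components: "integral\<^sup>L (PiM I (\<lambda>_. \<mu>)) (\<lambda>\<omega>. \<omega> i * \<omega> j) = 0"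
proof -
  interpret product_prob_space "\<lambda>_. \<mu>" by (rule product_prob_spaceI) (rule \<mu>(1))
  define F where "F k = (if k \<in> {i, j} then (\<lambda>t. t) else (\<lambda>t::real. 1))" for k
  have F: "integrable \<mu> (F k)" for k
    using mean(1) finite_measure.integrable_const[OF prob_space.finite_measure[OF \<mu>(1)]]
    by (simp add: F_def)
  have prod_F: "(\<Prod>k\<in>I. F k (\<omega> k)) = \<omega> i * \<omega> j" for \<omega>
  proof -
    have "(\<Prod>k\<in>I. F k (\<omega> k)) = (\<Prod>k\<in>I. if k \<in> {i, j} then \<omega> k else 1)"
      by (intro prod.cong) (auto simp: F_def)
    also have "\<dots> = (\<Prod>k\<in>I \<inter> {i, j}. \<omega> k)"
      by (rule prod.inter_restrict[symmetric, OF I(1)])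
    also have "I \<inter> {i, j} = {i, j}" using I by auto
    finally show ?thesis using I by simp
  qed
  show "integrable (PiM I (\<lambda>_. \<mu>)) (\<lambda>\<omega>. \<omega> i * \<omega> j)"
    using product_integrable_prod[where f = F, OF I(1) F] by (simp add: prod_F)
  have "integral\<^sup>L (PiM I (\<lambda>_. \<mu>)) (\<lambda>\<omega>. \<Prod>k\<in>I. F k (\<omega> k)) = (\<Prod>k\<in>I. integral\<^sup>L \<mu> (F k))"
    using product_integral_prod[where f = F, OF I(1) F] .
  also have "\<dots> = 0"
    using I mean(2) by (intro prod_zero bexI[of _ i]) (auto simp: F_def)
  finally show "integral\<^sup>L (PiM I (\<lambda>_. \<mu>)) (\<lambda>\<omega>. \<omega> i * \<omega> j) = 0"
    by (simp add: prod_F)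
qed

lemma
  fixes \<mu> :: "real measure"
  assumes \<mu>: "prob_space \<mu>" "sets \<mu> = sets borel" and I: "finite I"
    and mean: "integrable \<mu> (\<lambda>t. t)" "integral\<^sup>L \<mu> (\<lambda>t. t) = 0"
    and square: "integrable \<mu> (\<lambda>t. t\<^sup>2)"
  shows integrable_PiM_sum: "integrable (PiM I (\<lambda>_. \<mu>)) (\<lambda>\<omega>. \<Sum>i\<in>I. \<omega> i)"
    and integral_PiM_sum: "integral\<^sup>L (PiM I (\<lambda>_. \<mu>)) (\<lambda>\<omega>. \<Sum>i\<in>I. \<omega> i) = 0"
    and integrable_PiM_sum_square: "integrable (PiM I (\<lambda>_. \<mu>)) (\<lambda>\<omega>. (\<Sum>i\<in>I. \<omega> i)\<^sup>2)"
    and integral_PiM_sum_square: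
      "integral\<^sup>L (PiM I (\<lambda>_. \<mu>)) (\<lambda>\<omega>. (\<Sum>i\<in>I. \<omega> i)\<^sup>2) = real (card I) * integral\<^sup>L \<mu> (\<lambda>t. t\<^sup>2)"
proof -
  let ?P = "PiM I (\<lambda>_. \<mu>)"
  have linear: "integrable ?P (\<lambda>\<omega>. \<omega> i)" "integral\<^sup>L ?P (\<lambda>\<omega>. \<omega> i) = 0" if "i \<in> I" for i
    using integrable_PiM_component[OF \<mu> that _ mean(1)] integral_PiM_component[OF \<mu> that _ mean(1)] mean(2)
    by simp_all
  have quadratic: "integrable ?P (\<lambda>\<omega>. \<omega> i * \<omega> j) \<and>
      integral\<^sup>L ?P (\<lambda>\<omega>. \<omega> i * \<omega> j) = (if i = j then integral\<^sup>L \<mu> (\<lambda>t. t\<^sup>2) else 0)"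
    if "i \<in> I" "j \<in> I" for i j
  proof (cases "i = j")
    case True
    then show ?thesis
      using integrable_PiM_component[OF \<mu> that(1) _ square] integral_PiM_component[OF \<mu> that(1) _ square]
      by (simp add: power2_eq_square)
  next
    case False
    then show ?thesis
      using integrable_PiM_mult_components[OF \<mu> I that False mean]
        integral_PiM_mult_components[OF \<mu> I that False mean] by simp
  qed
  have square_sum: "(\<Sum>i\<in>I. \<omega> i)\<^sup>2 = (\<Sum>i\<in>I. \<Sum>j\<in>I. \<omega> i * \<omega> j)" for \<omega> :: "'a \<Rightarrow> real"
    by (simp add: power2_eq_square sum_product)
  show "integrable ?P (\<lambda>\<omega>. \<Sum>i\<in>I. \<omega> i)" "integral\<^sup>L ?P (\<lambda>\<omega>. \<Sum>i\<in>I. \<omega> i) = 0"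
    using linear by (simp_all add: Bochner_Integration.integral_sum)
  show "integrable ?P (\<lambda>\<omega>. (\<Sum>i\<in>I. \<omega> i)\<^sup>2)"
    unfolding square_sum using quadratic by simp
  show "integral\<^sup>L ?P (\<lambda>\<omega>. (\<Sum>i\<in>I. \<omega> i)\<^sup>2) = real (card I) * integral\<^sup>L \<mu> (\<lambda>t. t\<^sup>2)"
    unfolding square_sum using quadratic I by (simp add: Bochner_Integration.integral_sum)
qed

section \<open>The conditioned relaxation as a sum of independent terms\<close>

lemma distr_node_terms_shear:
  fixes a N n :: nat
  assumes "a < N" and e: "inj_on e {..<n}" "e \<in> {..<n} \<rightarrow> {..<N}"
  shows "distr (PiM {..<N} (\<lambda>_. unif01)) (PiM {..<n} (\<lambda>_. node_term_law ell))
           (\<lambda>x. \<lambda>i\<in>{..<n}. node_term ell (shear N a x (e i)))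
       = PiM {..<n} (\<lambda>_. node_term_law ell)"
proof -
  define U where "U = PiM {..<N} (\<lambda>_::nat. unif01)"
  define L where "L = PiM {..<N} (\<lambda>_::nat. node_term_law ell)"
  define P where "P = PiM {..<n} (\<lambda>_::nat. node_term_law ell)"
  define termwise where "termwise = compose {..<N} (node_term ell)"
  define select where "select = (\<lambda>\<omega>::nat \<Rightarrow> real. \<lambda>i\<in>{..<n}. \<omega> (e i))"
  have termwise_meas: "termwise \<in> measurable U L"
    unfolding termwise_def U_def L_def compose_def
  proof (rule measurable_restrict)
    fix i assume "i \<in> {..<N}"
    then have "(\<lambda>x. x i) \<in> measurable (PiM {..<N} (\<lambda>_::nat. unif01)) unif01"
      by (rule measurable_component_singleton)
    then show "(\<lambda>x. node_term ell (x i)) \<in> measurable (PiM {..<N} (\<lambda>_::nat. unif01)) (node_term_law ell)"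
      by (rule measurable_compose) (rule node_term_measurable_law)
  qed
  have select_meas: "select \<in> measurable L P"
    unfolding select_def L_def P_def
    by (rule measurable_restrict, rule measurable_component_singleton) (use e in auto)
  have shear_meas: "shear N a \<in> measurable U U"
    unfolding U_def by (rule shear_measurable)
  have "distr U L termwise = PiM {..<N} (\<lambda>i. distr unif01 (node_term_law ell) (node_term ell))"
    unfolding U_def L_def termwise_def
    by (rule distr_PiM_finite_prob_space')
      (auto intro: prob_space_unif01 prob_space_node_term_law node_term_measurable_law)
  also have "(\<lambda>i::nat. distr unif01 (node_term_law ell) (node_term ell)) = (\<lambda>_. node_term_law ell)"
    by (auto simp: node_term_law_def fun_eq_iff intro!: distr_cong)
  finally have termwise_law: "distr U L termwise = L" unfolding L_def .
  have select_law: "distr L P select = P"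
    unfolding L_def P_def select_def
    using distr_PiM_reindex[of "{..<N}" "\<lambda>_. node_term_law ell" e "{..<n}"] e prob_space_node_term_law
    by simp
  have "distr U P (select \<circ> termwise \<circ> shear N a) = distr (distr U U (shear N a)) P (select \<circ> termwise)"
    using select_meas termwise_meas shear_meas
    by (subst distr_distr) (auto intro: measurable_comp[OF termwise_meas select_meas])
  also have "\<dots> = distr (distr U L termwise) P select"
    using select_meas termwise_meas
    by (simp add: U_def distr_shear[OF assms(1)] distr_distr[symmetric])
  also have "\<dots> = P" by (simp add: termwise_law select_law)
  finally have "distr U P (select \<circ> termwise \<circ> shear N a) = P" .
  moreover have "select (termwise (shear N a x)) = (\<lambda>i\<in>{..<n}. node_term ell (shear N a x (e i)))" for x
    using e by (auto simp: select_def termwise_def compose_def fun_eq_iff Pi_iff)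
  ultimately show ?thesis
    unfolding U_def P_def by (simp add: comp_def)
qed

lemma AE_unif01_nondegenerate: "AE t in unif01. frac (t + 1/2) \<noteq> 0 \<and> frac (t - ell + 1/2) \<noteq> 0"
proof -
  have "{t. \<not> (frac (t + 1/2) \<noteq> 0 \<and> frac (t - ell + 1/2) \<noteq> 0)}
      \<subseteq> range (\<lambda>k::int. of_int k - 1/2) \<union> range (\<lambda>k::int. of_int k + ell - 1/2)"
  proof
    fix t assume "t \<in> {t. \<not> (frac (t + 1/2) \<noteq> 0 \<and> frac (t - ell + 1/2) \<noteq> 0)}"
    then consider k :: int where "t + 1/2 = of_int k" | k :: int where "t - ell + 1/2 = of_int k"
      by (auto simp: frac_eq_0_iff elim: Ints_cases)
    then show "t \<in> range (\<lambda>k::int. of_int k - 1/2) \<union> range (\<lambda>k::int. of_int k + ell - 1/2)"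
      by cases (auto simp: image_iff algebra_simps intro!: exI)
  qed
  then have "AE t in lborel. frac (t + 1/2) \<noteq> 0 \<and> frac (t - ell + 1/2) \<noteq> 0"
    by (intro AE_I'[OF countable_imp_null_set_lborel]) auto
  then show ?thesis unfolding unif01_def by (intro AE_uniform_measureI) (auto elim: AE_mp)
qed

lemma AE_nondegenerate_offsets:
  fixes a N :: nat
  assumes "a < N" "J \<subseteq> {..<N} - {a}"
  shows "AE x in PiM {..<N} (\<lambda>_. unif01). \<forall>c\<in>J.
           frac (frac (x c - x a) + 1/2) \<noteq> 0 \<and> frac (frac (x c - x a) - ell + 1/2) \<noteq> 0"
proof -
  define U where "U = PiM {..<N} (\<lambda>_::nat. unif01)"
  define Q where "Q t \<longleftrightarrow> frac (t + 1/2) \<noteq> 0 \<and> frac (t - ell + 1/2) \<noteq> 0" for t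
  have "Measurable.pred borel Q" unfolding Q_def by measurable
  then have Q_sets: "{t \<in> space unif01. Q t} \<in> sets unif01" by (simp add: pred_def)
  have "finite J" using assms(2) by (rule finite_subset) simp
  have component: "(\<lambda>y. y c) \<in> measurable U unif01" if "c \<in> J" for c
    unfolding U_def using that assms(2) by (intro measurable_component_singleton) auto
  have "AE y in U. Q (y c)" if "c \<in> J" for c
  proof -
    have law: "distr U unif01 (\<lambda>y. y c) = unif01"
      unfolding U_def using that assms(2) by (intro distr_PiM_component prob_space_unif01) auto
    have "AE t in unif01. Q t"
      using AE_unif01_nondegenerate[of ell] by (simp add: Q_def)
    then have "AE t in distr U unif01 (\<lambda>y. y c). Q t"
      unfolding law .
    then show ?thesis using AE_distr_iff[OF component[OF that] Q_sets] by simp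
  qed
  then have "AE y in U. \<forall>c\<in>J. Q (y c)"
    using \<open>finite J\<close> by (intro AE_finite_allI) auto
  then have "AE y in distr U U (shear N a). \<forall>c\<in>J. Q (y c)"
    unfolding U_def distr_shear[OF assms(1)] .
  moreover have "{y \<in> space U. \<forall>c\<in>J. Q (y c)} \<in> sets U"
  proof -
    have "Measurable.pred U (\<lambda>y. Q (y c))" if "c \<in> J" for c
      using measurable_sets[OF component[OF that] Q_sets]
      by (simp add: pred_def vimage_def Collect_conj_eq Int_commute)
    then show ?thesis using \<open>finite J\<close> by (simp add: pred_def[symmetric] pred_intros_finite)
  qed
  ultimately have "AE x in U. \<forall>c\<in>J. Q (shear N a x c)"
    using AE_distr_iff[of "shear N a" U U] by (simp add: U_def)
  then show ?thesis
    unfolding U_def[symmetric]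
  proof (rule AE_mp, intro AE_I2 impI ballI)
    fix x c assume "\<forall>c\<in>J. Q (shear N a x c)" "c \<in> J"
    moreover have "shear N a x c = frac (x c - x a)"
      using \<open>c \<in> J\<close> assms(2) by (auto simp: shear_def)
    ultimately show "frac (frac (x c - x a) + 1/2) \<noteq> 0 \<and> frac (frac (x c - x a) - ell + 1/2) \<noteq> 0"
      unfolding Q_def by metis
  qed
qed

lemma delta_len_cond_config_measurable [measurable]:
  assumes st: "spanning_tree N T" and fc: "fund_cycle_matrix N T Cm"
    and ab: "a < b" "b < N" and ell: "\<bar>ell\<bar> < 1/2"
  shows "(\<lambda>x. delta_len N T Cm (cond_config a b ell x) (a, b)) \<in> borel_measurable (node_law N)"
proof -
  note measurable_component_unif01 [measurable]
  have "(\<lambda>x. incid_len (cond_config a b ell x) v c) \<in> borel_measurable (node_law N)" for v c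
    by (cases "c < v"; cases "c = b"; cases "v = b";
        simp add: incid_len_def cond_config_def node_law_unif01; measurable)
  then show ?thesis
    unfolding delta_len_cond_config[OF assms] by measurable
qed

lemma distr_delta_len:
  assumes st: "spanning_tree N T" and fc: "fund_cycle_matrix N T Cm"
    and ab: "(a, b) \<in> springs N" and ell: "0 < \<bar>ell\<bar>" "\<bar>ell\<bar> < 1/2"
  shows "distr (node_law N) borel (\<lambda>x. delta_len N T Cm (cond_config a b ell x) (a, b))
       = distr (PiM {..<N - 2} (\<lambda>_. node_term_law ell)) borel (\<lambda>\<omega>. ((\<Sum>i<N - 2. \<omega> i) - 2 * ell) / real N)"
proof -
  have ab: "a < b" "b < N" using ab by (auto simp: springs_def)
  define n where "n = N - 2"
  define J where "J = {..<N} - {a, b}"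
  define U where "U = PiM {..<N} (\<lambda>_::nat. unif01)"
  define P where "P = PiM {..<n} (\<lambda>_::nat. node_term_law ell)"
  define H where "H = (\<lambda>\<omega>. ((\<Sum>i<n. \<omega> i) - 2 * ell) / real N)"
  have "finite J" "card J = n" using ab by (auto simp: J_def n_def card_Diff_subset)
  then obtain e where e: "bij_betw e {..<n} J"
    using ex_bij_betw_nat_finite[of J] by (metis atLeast0LessThan)
  then have e_inj: "inj_on e {..<n}" and e_J: "e \<in> {..<n} \<rightarrow> J" by (auto simp: bij_betw_def)
  define terms where "terms x = (\<lambda>i\<in>{..<n}. node_term ell (shear N a x (e i)))" for x
  have terms_law: "distr U P terms = P"
    unfolding U_def P_def terms_def
    using ab e_inj e_J by (intro distr_node_terms_shear) (auto simp: J_def)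
  have terms_meas [measurable]: "terms \<in> measurable U P"
    unfolding terms_def U_def P_def
  proof (rule measurable_restrict)
    fix i assume "i \<in> {..<n}"
    then have "e i \<in> {..<N}" using e_J by (auto simp: J_def)
    then have "(\<lambda>x. shear N a x (e i)) \<in> measurable (PiM {..<N} (\<lambda>_. unif01)) unif01"
      by (intro measurable_compose[OF shear_measurable measurable_component_singleton])
    then show "(\<lambda>x. node_term ell (shear N a x (e i))) \<in> measurable (PiM {..<N} (\<lambda>_. unif01)) (node_term_law ell)"
      by (rule measurable_compose) (rule node_term_measurable_law)
  qed
  have H_meas [measurable]: "H \<in> borel_measurable P"
    unfolding H_def P_def by measurable
  have "AE x in U. \<forall>c\<in>J. frac (frac (x c - x a) + 1/2) \<noteq> 0 \<and> frac (frac (x c - x a) - ell + 1/2) \<noteq> 0"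
    unfolding U_def using ab by (intro AE_nondegenerate_offsets) (auto simp: J_def)
  then have "AE x in U. delta_len N T Cm (cond_config a b ell x) (a, b) = H (terms x)"
  proof (rule AE_mp, intro AE_I2 impI)
    fix x assume nondeg: "\<forall>c\<in>J. frac (frac (x c - x a) + 1/2) \<noteq> 0 \<and> frac (frac (x c - x a) - ell + 1/2) \<noteq> 0"
    have "(\<Sum>c\<in>J. node_term ell (frac (x c - x a))) = (\<Sum>i<n. node_term ell (frac (x (e i) - x a)))"
      by (rule sum.reindex_bij_betw[OF e, symmetric])
    also have "\<dots> = (\<Sum>i<n. terms x i)"
      using e_J by (auto simp: terms_def shear_def J_def intro!: sum.cong)
    finally show "delta_len N T Cm (cond_config a b ell x) (a, b) = H (terms x)"
      using delta_len_eq_sum_node_term[OF st fc ab ell(2)] nondeg by (simp add: H_def J_def)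
  qed
  then have "distr U borel (\<lambda>x. delta_len N T Cm (cond_config a b ell x) (a, b)) = distr U borel (H \<circ> terms)"
    using delta_len_cond_config_measurable[OF st fc ab ell(2)] measurable_comp[OF terms_meas H_meas]
    by (intro distr_cong_AE) (auto simp: U_def node_law_unif01)
  also have "\<dots> = distr (distr U P terms) borel H"
    by (rule distr_distr[symmetric]) measurable
  finally show ?thesis
    unfolding terms_law by (simp add: U_def P_def H_def n_def node_law_unif01)
qed

section \<open>Berry--Esseen for the conditioned relaxation\<close>

lemma
  fixes X :: "'a \<Rightarrow> real" and Y :: "'b \<Rightarrow> real" and f :: "real \<Rightarrow> real"
  assumes law: "distr M borel X = distr M' borel Y"
    and [measurable]: "X \<in> borel_measurable M" "Y \<in> borel_measurable M'" "f \<in> borel_measurable borel"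
  shows integral_comp_eq_of_distr_eq: "(\<integral>x. f (X x) \<partial>M) = (\<integral>y. f (Y y) \<partial>M')"
    and measure_comp_le_eq_of_distr_eq:
      "measure M {x \<in> space M. f (X x) \<le> t} = measure M' {y \<in> space M'. f (Y y) \<le> t}"
proof -
  show "(\<integral>x. f (X x) \<partial>M) = (\<integral>y. f (Y y) \<partial>M')"
    using integral_distr[of X M borel f] integral_distr[of Y M' borel f] law by simp
  have [measurable]: "{s. f s \<le> t} \<in> sets borel" by measurable
  have "measure M {x \<in> space M. f (X x) \<le> t} = measure (distr M borel X) {s. f s \<le> t}"
    by (subst measure_distr) (auto intro!: arg_cong[where f = "measure M"])
  also have "\<dots> = measure M' {y \<in> space M'. f (Y y) \<le> t}"
    by (subst law, subst measure_distr) (auto intro!: arg_cong[where f = "measure M'"])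
  finally show "measure M {x \<in> space M. f (X x) \<le> t} = measure M' {y \<in> space M'. f (Y y) \<le> t}" .
qed

lemma
  fixes X :: "'a \<Rightarrow> real" and Y :: "'b \<Rightarrow> real"
  assumes law: "distr M borel X = distr P borel (\<lambda>\<omega>. (Y \<omega> - c) / k)"
    and X: "X \<in> borel_measurable M" and Y: "Y \<in> borel_measurable P" and "prob_space P"
    and Y_moments: "integrable P Y" "integral\<^sup>L P Y = 0" "integrable P (\<lambda>\<omega>. (Y \<omega>)\<^sup>2)"
      "integral\<^sup>L P (\<lambda>\<omega>. (Y \<omega>)\<^sup>2) = v"
    and "k > 0" "v > 0"
  shows integral_affine_image: "integral\<^sup>L M X = - c / k"
    and variance_affine_image: "integral\<^sup>L M (\<lambda>x. (X x - - c / k)\<^sup>2) = v / k\<^sup>2"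
    and standardized_cdf_affine_image:
      "measure M {x \<in> space M. (X x - - c / k) / sqrt (v / k\<^sup>2) \<le> t}
       = measure P {\<omega> \<in> space P. Y \<omega> / sqrt v \<le> t}"
proof -
  interpret P: prob_space P by fact
  have [measurable]: "(\<lambda>\<omega>. (Y \<omega> - c) / k) \<in> borel_measurable P" using Y by measurable
  note transfer = integral_comp_eq_of_distr_eq[OF law X this] measure_comp_le_eq_of_distr_eq[OF law X this]
  have centred: "(Y \<omega> - c) / k + c / k = Y \<omega> / k" for \<omega>
    by (simp add: diff_divide_distrib)
  have "integral\<^sup>L M X = (\<integral>\<omega>. Y \<omega> / k - c / k \<partial>P)"
    using transfer(1)[of "\<lambda>t. t"] by (simp add: diff_divide_distrib)
  also have "\<dots> = - c / k"
    using Y_moments by (simp add: P.prob_space)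
  finally show "integral\<^sup>L M X = - c / k" .
  have "integral\<^sup>L M (\<lambda>x. (X x - - c / k)\<^sup>2) = (\<integral>\<omega>. (Y \<omega>)\<^sup>2 / k\<^sup>2 \<partial>P)"
    using transfer(1)[of "\<lambda>t. (t - - c / k)\<^sup>2"] by (simp add: centred power_divide)
  also have "\<dots> = v / k\<^sup>2"
    using Y_moments by simp
  finally show "integral\<^sup>L M (\<lambda>x. (X x - - c / k)\<^sup>2) = v / k\<^sup>2" .
  have "k * sqrt (v / k\<^sup>2) = sqrt v"
    using \<open>k > 0\<close> by (simp add: real_sqrt_divide)
  then show "measure M {x \<in> space M. (X x - - c / k) / sqrt (v / k\<^sup>2) \<le> t}
       = measure P {\<omega> \<in> space P. Y \<omega> / sqrt v \<le> t}"
    using transfer(2)[of "\<lambda>t. (t - - c / k) / sqrt (v / k\<^sup>2)" t] by (simp add: centred)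
qed

lemma power2_less_abs:
  fixes x :: real
  assumes "0 < \<bar>x\<bar>" "\<bar>x\<bar> < 1"
  shows "x\<^sup>2 < \<bar>x\<bar>"
  using mult_strict_left_mono[OF assms(2,1)] by (simp add: power2_eq_square)

lemma
  assumes "0 < \<bar>ell\<bar>" "\<bar>ell\<bar> < 1/2"
  shows integrable_node_term_sum: "integrable (PiM {..<n} (\<lambda>_. node_term_law ell)) (\<lambda>\<omega>. \<Sum>i<n. \<omega> i)"
    and integral_node_term_sum: "integral\<^sup>L (PiM {..<n} (\<lambda>_. node_term_law ell)) (\<lambda>\<omega>. \<Sum>i<n. \<omega> i) = 0"
    and integrable_node_term_sum_square:
      "integrable (PiM {..<n} (\<lambda>_. node_term_law ell)) (\<lambda>\<omega>. (\<Sum>i<n. \<omega> i)\<^sup>2)"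
    and integral_node_term_sum_square:
      "integral\<^sup>L (PiM {..<n} (\<lambda>_. node_term_law ell)) (\<lambda>\<omega>. (\<Sum>i<n. \<omega> i)\<^sup>2)
       = real n * (\<bar>ell\<bar> - ell\<^sup>2)"
proof -
  note moments = node_term_law_moments[OF assms]
  note iid = prob_space_node_term_law sets_node_term_law finite_lessThan moments(1-3)
  show "integrable (PiM {..<n} (\<lambda>_. node_term_law ell)) (\<lambda>\<omega>. \<Sum>i<n. \<omega> i)"
    "integral\<^sup>L (PiM {..<n} (\<lambda>_. node_term_law ell)) (\<lambda>\<omega>. \<Sum>i<n. \<omega> i) = 0"
    "integrable (PiM {..<n} (\<lambda>_. node_term_law ell)) (\<lambda>\<omega>. (\<Sum>i<n. \<omega> i)\<^sup>2)"
    "integral\<^sup>L (PiM {..<n} (\<lambda>_. node_term_law ell)) (\<lambda>\<omega>. (\<Sum>i<n. \<omega> i)\<^sup>2)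
       = real n * (\<bar>ell\<bar> - ell\<^sup>2)"
    using integrable_PiM_sum[OF iid] integral_PiM_sum[OF iid] integrable_PiM_sum_square[OF iid]
      integral_PiM_sum_square[OF iid] moments(4)
    by simp_all
qed

lemma berry_esseen_node_terms:
  assumes "berry_esseen_const C" "n \<ge> 1" "0 < \<bar>ell\<bar>" "\<bar>ell\<bar> < 1/2"
  shows "\<bar>measure (PiM {..<n} (\<lambda>_. node_term_law ell))
            {\<omega> \<in> space (PiM {..<n} (\<lambda>_. node_term_law ell)).
               (\<Sum>i<n. \<omega> i) / (sqrt (real n) * sqrt (\<bar>ell\<bar> - ell\<^sup>2)) \<le> y}
          - std_normal_cdf y\<bar>
       \<le> C / sqrt (real n) * ((ell\<^sup>2 + (1 - \<bar>ell\<bar>)\<^sup>2) / sqrt (\<bar>ell\<bar> - ell\<^sup>2))"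
proof -
  define s where "s = \<bar>ell\<bar> - ell\<^sup>2"
  define \<rho> where "\<rho> = integral\<^sup>L (node_term_law ell) (\<lambda>t. \<bar>t\<bar> ^ 3)"
  have s: "s > 0" using power2_less_abs[of ell] assms(3,4) by (simp add: s_def)
  note moments = node_term_law_moments[OF assms(3,4), folded s_def]
  note berry_esseen = assms(1)[unfolded berry_esseen_const_def, THEN spec[of _ "node_term_law ell"],
      THEN spec[of _ n], THEN spec[of _ "sqrt s"], THEN spec[of _ \<rho>], THEN mp, THEN spec[of _ y]]
  have "\<bar>measure (PiM {..<n} (\<lambda>_. node_term_law ell))
            {\<omega> \<in> space (PiM {..<n} (\<lambda>_. node_term_law ell)). (\<Sum>i<n. \<omega> i) / (sqrt (real n) * sqrt s) \<le> y}
          - std_normal_cdf y\<bar> \<le> C * \<rho> / (sqrt s ^ 3 * sqrt (real n))"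
    using prob_space_node_term_law moments s assms(2) by (intro berry_esseen) (simp add: \<rho>_def)
  also have "C * \<rho> / (sqrt s ^ 3 * sqrt (real n)) = C / sqrt (real n) * ((ell\<^sup>2 + (1 - \<bar>ell\<bar>)\<^sup>2) / sqrt s)"
  proof -
    have "sqrt s ^ 3 = s * sqrt s" using s by (simp add: power3_eq_cube)
    moreover have "sqrt (real n) > 0" using assms(2) by simp
    ultimately show ?thesis
      using s by (simp add: \<rho>_def moments(6) field_simps)
  qed
  finally show ?thesis by (simp only: s_def)
qed

theorem mainTheorem8:
  fixes N a b :: nat and ell C :: real
    and T :: "(nat \<times> nat) set" and Cm :: "nat \<times> nat \<Rightarrow> nat \<times> nat \<Rightarrow> real"
  assumes "N \<ge> 3"
    and "(a, b) \<in> springs N"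
    and "0 < \<bar>ell\<bar>" and "\<bar>ell\<bar> < 1/2"
    and "berry_esseen_const C"
    and "spanning_tree N T" and "fund_cycle_matrix N T Cm"
  shows "let M = node_law N;
             D = (\<lambda>x. delta_len N T Cm (cond_config a b ell x) (a, b));
             \<mu> = integral\<^sup>L M D;
             V = integral\<^sup>L M (\<lambda>x. (D x - \<mu>)\<^sup>2);
             F = (\<lambda>y. measure M {x \<in> space M. (D x - \<mu>) / sqrt V \<le> y})
         in \<forall>y. \<bar>F y - std_normal_cdf y\<bar>
               \<le> C / sqrt (real N - 2) * ((ell\<^sup>2 + (1 - \<bar>ell\<bar>)\<^sup>2) / sqrt (\<bar>ell\<bar> - ell\<^sup>2))"
proof -
  define n where "n = N - 2"
  define P where "P = PiM {..<n} (\<lambda>_. node_term_law ell)"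
  define D where "D x = delta_len N T Cm (cond_config a b ell x) (a, b)" for x
  have ab: "a < b" "b < N" using assms(2) by (auto simp: springs_def)
  have n: "n \<ge> 1" "real N - 2 = real n" using assms(1) by (auto simp: n_def)
  have v: "real n * (\<bar>ell\<bar> - ell\<^sup>2) > 0" using n(1) power2_less_abs[of ell] assms(3,4) by simp
  have law: "distr (node_law N) borel D = distr P borel (\<lambda>\<omega>. ((\<Sum>i<n. \<omega> i) - 2 * ell) / real N)"
    using distr_delta_len[OF assms(6,7,2,3,4)] by (simp add: D_def[abs_def] P_def n_def)
  have meas: "D \<in> borel_measurable (node_law N)" "(\<lambda>\<omega>. \<Sum>i<n. \<omega> i) \<in> borel_measurable P"
    using delta_len_cond_config_measurable[OF assms(6,7) ab assms(4)] by (simp_all add: D_def[abs_def] P_def)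
  have P: "prob_space P" and N: "real N > 0"
    using assms(1) by (simp_all add: P_def prob_space_PiM prob_space_node_term_law)
  note sum_moments = integrable_node_term_sum integral_node_term_sum
    integrable_node_term_sum_square integral_node_term_sum_square
  note affine_image = integral_affine_image variance_affine_image standardized_cdf_affine_image
  note standardize = affine_image[OF law meas P sum_moments[OF assms(3,4), where n = n, folded P_def] N v]
  show ?thesis
    unfolding Let_def D_def[symmetric] standardize n(2)
    using berry_esseen_node_terms[OF assms(5) n(1) assms(3,4)] by (simp add: P_def real_sqrt_mult)
qed
end
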